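(* Let $V_1$ and $V_2$ be disjoint finite nonempty vertex sets with $|V_1|=n_1$, $|V_2|=n_2$, and let $E\subseteq\{\{u,w\}: u\in V_1, w\in V_2\}$ be an arbitrary set of inter-links. Let $s_1,s_2$ be two additional vertices (super-nodes), $s_1$ belonging to the first QLAN and $s_2$ to the second. Consider the graph $G_{n_1+1,n_2+1}$ on vertex set $V_1\cup\{s_1\}\cup V_2\cup\{s_2\}$ with edge set $$E\;\cup\;\{\{s_1,s_2\}\}\;\cup\;\{\{v,s_2\}: v\in V_1\}\;\cup\;\{\{w,s_1\}: w\in V_2\},$$ i.e. every client node of one QLAN is connected to its original inter-link neighbours in the other QLAN and to the super-node of the other QLAN, and the two super-nodes are adjacent. Then the $(n_1+n_2+2)$-qubit graph state $|G_{n_1+1,n_2+1}\rangle$ can be transformed by LOCC (single-qubit Pauli measurements on the qubits of $s_1$ and $s_2$ followed by outcome-dependent local unitary corrections on the remaining qubits) into the $(n_1+n_2)$-qubit graph state $|\bar G_{n_1,n_2}\rangle$, where $\bar G_{n_1,n_2}$ is the complement Inter-QLAN: the graph on $V_1\cup V_2$ with edge set $\bar E=\{\{u,w\}: u\in V_1,\ w\in V_2,\ \{u,w\}\notin E\}$. *)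

theory Defs
  imports Complex_Main
begin

text \<open>A (unnormalised) pure state on a
finite qubit set W is a function from computational basis states to amplitudes;
a basis state is encoded by the set S \<subseteq> W of qubits in state |1>.
Amplitudes of sets not contained in W are 0.  Edges are 2-element vertex sets.\<close>

type_synonym 'v qstate = "'v set \<Rightarrow> complex"

definition graph_state :: "'v set \<Rightarrow> 'v set set \<Rightarrow> 'v qstate" where
  "graph_state W Ed = (\<lambda>S. if S \<subseteq> W then (-1) ^ card {e \<in> Ed. e \<subseteq> S} else 0)"

datatype pauli = PX | PY | PZ

text \<open>Eigenvector of a Pauli operator; outcome True means eigenvalue +1, False means -1.
  Argument b is the computational basis index (False = |0>, True = |1>).\<close>
fun pauli_eigvec :: "pauli \<Rightarrow> bool \<Rightarrow> bool \<Rightarrow> complex" where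
  "pauli_eigvec PZ r b = (if b = r then 0 else 1)"
| "pauli_eigvec PX r b = (if b then (if r then 1 else -1) else 1) / complex_of_real (sqrt 2)"
| "pauli_eigvec PY r b = (if b then (if r then \<i> else - \<i>) else 1) / complex_of_real (sqrt 2)"

text \<open>Projective measurement of the Pauli P on qubit s of a state on W with outcome r:
  the projected state is |e_{P,r}> \<otimes> |phi>; this returns the (unnormalised)
  post-measurement state phi of the remaining qubits W - {s}.\<close>
definition pauli_measure :: "'v set \<Rightarrow> 'v \<Rightarrow> pauli \<Rightarrow> bool \<Rightarrow> 'v qstate \<Rightarrow> 'v qstate" where
  "pauli_measure W s P r \<psi> = (\<lambda>T. if T \<subseteq> W - {s}
      then (\<Sum>c\<in>UNIV. cnj (pauli_eigvec P r c) * \<psi> (if c then insert s T else T))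
      else 0)"

text \<open>A single-qubit operator as a 2x2 matrix M out in.\<close>
definition unitary1 :: "(bool \<Rightarrow> bool \<Rightarrow> complex) \<Rightarrow> bool" where
  "unitary1 M \<longleftrightarrow> (\<forall>i j. (\<Sum>k\<in>UNIV. cnj (M k i) * M k j) = (if i = j then 1 else 0))"

definition local_op :: "'v set \<Rightarrow> ('v \<Rightarrow> bool \<Rightarrow> bool \<Rightarrow> complex) \<Rightarrow> 'v qstate \<Rightarrow> 'v qstate" where
  "local_op W U \<psi> = (\<lambda>T. if T \<subseteq> W
      then (\<Sum>S\<in>Pow W. (\<Prod>v\<in>W. U v (v \<in> T) (v \<in> S)) * \<psi> S)
      else 0)"

end

theory Submission
  imports Defs
begin

text \<open>Measure \<open>X\<close> on both super-nodes. The inter-links \<open>E\<close> avoid \<open>s1\<close> and \<open>s2\<close>, so on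
  \<open>T \<union> X\<close> with \<open>T \<subseteq> V1 \<union> V2\<close> and \<open>X \<subseteq> {s1, s2}\<close> the amplitude of \<open>|G>\<close> is the \<open>E\<close>-sign
  \<open>k\<close> of \<open>T\<close> times the signs of the edge \<open>s1 s2\<close> and of the two stars, i.e. \<open>k, k q, k p, -k p q\<close>
  with \<open>p = (-1)^|T \<inter> V1|\<close> and \<open>q = (-1)^|T \<inter> V2|\<close>. For outcomes \<open>a, b = \<plusminus>1\<close> the remaining
  amplitude is \<open>k (1 + a q + b p - a b p q) / 2\<close>. Applying the phase \<open>a\<close> to the \<open>|1>\<close>-component of
  every qubit of \<open>V1\<close> and \<open>b\<close> on \<open>V2\<close> turns this into \<open>\<plusminus>k (-1)^(|T \<inter> V1| |T \<inter> V2|)\<close>: the sign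
  of the complete bipartite graph between \<open>V1\<close> and \<open>V2\<close> times that of \<open>E\<close>, which is the sign
  of the complement graph state.\<close>

definition pauli_eigenvalue :: "bool \<Rightarrow> complex" where
  "pauli_eigenvalue r = (if r then 1 else -1)"

lemma pauli_measure_PX:
  assumes "T \<subseteq> W - {s}"
  shows "pauli_measure W s PX r \<psi> T
    = (\<psi> T + pauli_eigenvalue r * \<psi> (insert s T)) / complex_of_real (sqrt 2)"
  using assms by (simp add: pauli_measure_def pauli_eigenvalue_def UNIV_bool add_divide_distrib)

lemma pauli_measure_PX_twice:
  assumes "s1 \<noteq> s2" "s2 \<in> W" "T \<subseteq> W - {s1, s2}"
  shows "pauli_measure (W - {s1}) s2 PX b (pauli_measure W s1 PX a \<psi>) T
    = (\<psi> T + pauli_eigenvalue a * \<psi> (insert s1 T) + pauli_eigenvalue b * \<psi> (insert s2 T)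
       + pauli_eigenvalue a * pauli_eigenvalue b * \<psi> (insert s1 (insert s2 T))) / 2"
proof -
  have "complex_of_real (sqrt 2) * complex_of_real (sqrt 2) = 2"
    by (simp flip: of_real_mult)
  moreover have "T \<subseteq> W - {s1} - {s2}" "insert s2 T \<subseteq> W - {s1}" "T \<subseteq> W - {s1}"
    using assms by auto
  ultimately show ?thesis
    by (simp add: pauli_measure_PX insert_commute field_simps)
qed

lemma graph_state_Un:
  assumes "finite A" "finite B" "A \<inter> B = {}"
  shows "graph_state W (A \<union> B) S = graph_state W A S * graph_state W B S"
proof -
  have "{e \<in> A \<union> B. e \<subseteq> S} = {e \<in> A. e \<subseteq> S} \<union> {e \<in> B. e \<subseteq> S}" by blast
  moreover have "card ({e \<in> A. e \<subseteq> S} \<union> {e \<in> B. e \<subseteq> S})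
      = card {e \<in> A. e \<subseteq> S} + card {e \<in> B. e \<subseteq> S}"
    using assms by (intro card_Un_disjoint) auto
  ultimately show ?thesis by (simp add: graph_state_def power_add)
qed

lemma graph_state_square:
  "S \<subseteq> W \<Longrightarrow> graph_state W Ed S * graph_state W Ed S = 1"
  by (simp add: graph_state_def flip: power_add)

lemma graph_state_insert_isolated:
  assumes "\<forall>e \<in> Ed. s \<notin> e" "s \<in> W"
  shows "graph_state W Ed (insert s S) = graph_state W Ed S"
proof -
  have "{e \<in> Ed. e \<subseteq> insert s S} = {e \<in> Ed. e \<subseteq> S}" using assms(1) by blast
  then show ?thesis using assms(2) by (simp add: graph_state_def)
qed

lemma graph_state_edge:
  assumes "S \<subseteq> W"
  shows "graph_state W {e} S = (if e \<subseteq> S then -1 else 1)"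
proof -
  have "{e' \<in> {e}. e' \<subseteq> S} = (if e \<subseteq> S then {e} else {})" by auto
  then show ?thesis using assms by (simp add: graph_state_def)
qed

lemma graph_state_star:
  assumes "s \<notin> V" "S \<subseteq> W"
  shows "graph_state W {{v, s} | v. v \<in> V} S = (if s \<in> S then (-1) ^ card (V \<inter> S) else 1)"
proof -
  have "{e \<in> {{v, s} | v. v \<in> V}. e \<subseteq> S} = (if s \<in> S then (\<lambda>v. {v, s}) ` (V \<inter> S) else {})"
    by auto
  moreover have "inj_on (\<lambda>v. {v, s}) (V \<inter> S)"
    using assms(1) by (auto intro!: inj_onI simp: doubleton_eq_iff)
  ultimately show ?thesis using assms(2) by (simp add: graph_state_def card_image)
qed

lemma graph_state_biclique:
  assumes "V1 \<inter> V2 = {}" "S \<subseteq> W"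
  shows "graph_state W {{u, w} | u w. u \<in> V1 \<and> w \<in> V2} S
    = (-1) ^ (card (V1 \<inter> S) * card (V2 \<inter> S))"
proof -
  have "{e \<in> {{u, w} | u w. u \<in> V1 \<and> w \<in> V2}. e \<subseteq> S}
      = (\<lambda>(u, w). {u, w}) ` ((V1 \<inter> S) \<times> (V2 \<inter> S))"
    by auto
  moreover have "inj_on (\<lambda>(u, w). {u, w}) ((V1 \<inter> S) \<times> (V2 \<inter> S))"
    using assms(1) by (auto intro!: inj_onI simp: doubleton_eq_iff)
  ultimately show ?thesis
    using assms(2) by (simp add: graph_state_def card_image card_cartesian_product)
qed

lemma finite_biclique:
  "finite V1 \<Longrightarrow> finite V2 \<Longrightarrow> finite {{u, w} | u w. u \<in> V1 \<and> w \<in> V2}"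
proof -
  assume "finite V1" "finite V2"
  moreover have "{{u, w} | u w. u \<in> V1 \<and> w \<in> V2} = (\<lambda>(u, w). {u, w}) ` (V1 \<times> V2)"
    by auto
  ultimately show ?thesis by simp
qed

lemma graph_state_bipartite_complement:
  assumes "finite V1" "finite V2" "V1 \<inter> V2 = {}"
    and "E \<subseteq> {{u, w} | u w. u \<in> V1 \<and> w \<in> V2}" and "S \<subseteq> W"
  shows "graph_state W {{u, w} | u w. u \<in> V1 \<and> w \<in> V2 \<and> {u, w} \<notin> E} S
    = (-1) ^ (card (V1 \<inter> S) * card (V2 \<inter> S)) * graph_state W E S"
proof -
  let ?K = "{{u, w} | u w. u \<in> V1 \<and> w \<in> V2}"
  let ?Gbar = "{{u, w} | u w. u \<in> V1 \<and> w \<in> V2 \<and> {u, w} \<notin> E}"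
  have fin: "finite ?K" using assms(1,2) by (rule finite_biclique)
  have "?K = ?Gbar \<union> E" using assms(4) by blast
  then have "graph_state W ?K S = graph_state W ?Gbar S * graph_state W E S"
    using fin finite_subset[OF assms(4) fin] by (auto intro: graph_state_Un)
  then have "graph_state W ?K S * graph_state W E S = graph_state W ?Gbar S"
    using graph_state_square[OF assms(5)] by (simp add: mult.assoc)
  then show ?thesis using graph_state_biclique[OF assms(3,5)] by simp
qed

definition phase_gate :: "complex \<Rightarrow> bool \<Rightarrow> bool \<Rightarrow> complex" where
  "phase_gate z i j = (if i \<noteq> j then 0 else if i then z else 1)"

lemma unitary1_phase_gate: "cmod z = 1 \<Longrightarrow> unitary1 (phase_gate z)"
  by (auto simp: unitary1_def phase_gate_def UNIV_bool complex_norm_square[symmetric] mult.commute)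

lemma local_op_diagonal:
  assumes "finite A" "T \<subseteq> A" "\<And>v i j. v \<in> A \<Longrightarrow> i \<noteq> j \<Longrightarrow> U v i j = 0"
  shows "local_op A U \<psi> T = (\<Prod>v\<in>A. U v (v \<in> T) (v \<in> T)) * \<psi> T"
proof -
  have "(\<Prod>v\<in>A. U v (v \<in> T) (v \<in> S)) = 0" if S: "S \<subseteq> A" "S \<noteq> T" for S
  proof -
    obtain v where "v \<in> A" "(v \<in> T) \<noteq> (v \<in> S)" using S assms(2) by blast
    then show ?thesis using assms(1,3) by (intro prod_zero) blast+
  qed
  then have "(\<Sum>S\<in>Pow A. (\<Prod>v\<in>A. U v (v \<in> T) (v \<in> S)) * \<psi> S)
      = (\<Sum>S\<in>Pow A. if S = T then (\<Prod>v\<in>A. U v (v \<in> T) (v \<in> T)) * \<psi> T else 0)"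
    by (intro sum.cong) auto
  then show ?thesis using assms(1,2) by (simp add: local_op_def)
qed

lemma local_op_phase_gates:
  assumes "finite A" "T \<subseteq> A"
  shows "local_op A (\<lambda>v. phase_gate (z v)) \<psi> T = (\<Prod>v\<in>T. z v) * \<psi> T"
proof -
  have "(\<Prod>v\<in>A. phase_gate (z v) (v \<in> T) (v \<in> T)) = (\<Prod>v\<in>A \<inter> T. z v)"
    using assms(1) by (simp add: phase_gate_def prod.inter_restrict)
  also have "A \<inter> T = T" using assms(2) by blast
  finally show ?thesis
    using assms by (simp add: local_op_diagonal phase_gate_def)
qed

lemma graph_state_super_nodes:
  assumes "finite V1" "finite V2" "s1 \<notin> V1 \<union> V2" "s2 \<notin> V1 \<union> V2" "s1 \<noteq> s2"
    and "E \<subseteq> {{u, w} | u w. u \<in> V1 \<and> w \<in> V2}" and "S \<subseteq> W"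
  shows "graph_state W (E \<union> {{s1, s2}} \<union> {{v, s2} | v. v \<in> V1} \<union> {{w, s1} | w. w \<in> V2}) S
    = graph_state W E S * (if {s1, s2} \<subseteq> S then -1 else 1)
      * (if s2 \<in> S then (-1) ^ card (V1 \<inter> S) else 1)
      * (if s1 \<in> S then (-1) ^ card (V2 \<inter> S) else 1)"
proof -
  let ?St1 = "{{w, s1} | w. w \<in> V2}" and ?St2 = "{{v, s2} | v. v \<in> V1}"
  have "?St1 = (\<lambda>w. {w, s1}) ` V2" "?St2 = (\<lambda>v. {v, s2}) ` V1" by auto
  then have fin: "finite E" "finite ?St1" "finite ?St2"
    using assms(1,2) finite_subset[OF assms(6) finite_biclique] by auto
  have "graph_state W (E \<union> {{s1, s2}} \<union> ?St2 \<union> ?St1) S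
      = graph_state W (E \<union> {{s1, s2}} \<union> ?St2) S * graph_state W ?St1 S"
    using fin assms(3-6) by (intro graph_state_Un) (auto simp: doubleton_eq_iff)
  also have "graph_state W (E \<union> {{s1, s2}} \<union> ?St2) S
      = graph_state W (E \<union> {{s1, s2}}) S * graph_state W ?St2 S"
    using fin assms(3-6) by (intro graph_state_Un) (auto simp: doubleton_eq_iff)
  also have "graph_state W (E \<union> {{s1, s2}}) S = graph_state W E S * graph_state W {{s1, s2}} S"
    using fin assms(3-6) by (intro graph_state_Un) auto
  finally show ?thesis
    using assms(3,4,7) by (simp add: graph_state_edge graph_state_star)
qed

lemma X_measurements_of_super_nodes:
  assumes "finite V1" "finite V2" "s1 \<notin> V1 \<union> V2" "s2 \<notin> V1 \<union> V2" "s1 \<noteq> s2"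
    and "E \<subseteq> {{u, w} | u w. u \<in> V1 \<and> w \<in> V2}" and "T \<subseteq> V1 \<union> V2"
  defines "W \<equiv> V1 \<union> {s1} \<union> V2 \<union> {s2}"
    and "G \<equiv> E \<union> {{s1, s2}} \<union> {{v, s2} | v. v \<in> V1} \<union> {{w, s1} | w. w \<in> V2}"
  shows "pauli_measure (W - {s1}) s2 PX b (pauli_measure W s1 PX a (graph_state W G)) T
    = graph_state (V1 \<union> V2) E T
      * (1 + pauli_eigenvalue a * (-1) ^ card (V2 \<inter> T) + pauli_eigenvalue b * (-1) ^ card (V1 \<inter> T)
         - pauli_eigenvalue a * pauli_eigenvalue b * (-1) ^ card (V1 \<inter> T) * (-1) ^ card (V2 \<inter> T)) / 2"
proof -
  have sW: "T \<subseteq> W" "insert s1 T \<subseteq> W" "insert s2 T \<subseteq> W" "insert s1 (insert s2 T) \<subseteq> W"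
    using assms(7) unfolding W_def by auto
  have "\<forall>e \<in> E. s1 \<notin> e" "\<forall>e \<in> E. s2 \<notin> e" using assms(3,4,6) by auto
  then have E_at: "graph_state W E (insert s1 T) = graph_state W E T"
    "graph_state W E (insert s2 T) = graph_state W E T"
    "graph_state W E (insert s1 (insert s2 T)) = graph_state W E T"
    unfolding W_def by (simp_all add: graph_state_insert_isolated)
  have "s1 \<notin> T" "s2 \<notin> T" using assms(3,4,7) by auto
  then have G_at: "graph_state W G T = graph_state W E T"
    "graph_state W G (insert s1 T) = graph_state W E T * (-1) ^ card (V2 \<inter> T)"
    "graph_state W G (insert s2 T) = graph_state W E T * (-1) ^ card (V1 \<inter> T)"
    "graph_state W G (insert s1 (insert s2 T))
       = - graph_state W E T * (-1) ^ card (V1 \<inter> T) * (-1) ^ card (V2 \<inter> T)"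
    using assms(3,4,5) sW E_at
    by (simp_all add: graph_state_super_nodes[OF assms(1-6), folded G_def])
  have "graph_state W E T = graph_state (V1 \<union> V2) E T"
    using assms(7) sW(1) by (simp add: graph_state_def)
  moreover have "T \<subseteq> W - {s1, s2}" "s2 \<in> W" using assms(3,4,7) unfolding W_def by auto
  ultimately show ?thesis
    using assms(5) by (simp add: pauli_measure_PX_twice G_at field_simps)
qed

text \<open>For \<open>x, y = \<plusminus>1\<close>, \<open>(1 + x + y - x y) / 2\<close> is \<open>-1\<close> exactly when \<open>x = y = -1\<close>.\<close>

lemma phase_corrected_outcome_sign:
  fixes m n :: nat
  shows "pauli_eigenvalue a ^ m * pauli_eigenvalue b ^ n
      * (1 + pauli_eigenvalue a * (-1) ^ n + pauli_eigenvalue b * (-1) ^ m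
         - pauli_eigenvalue a * pauli_eigenvalue b * (-1) ^ m * (-1) ^ n) / 2
    = (if a \<or> b then 1 else -1) * (-1) ^ (m * n)"
  by (cases "even m"; cases "even n"; cases a; cases b)
     (simp_all add: pauli_eigenvalue_def neg_one_even_power neg_one_odd_power)

lemma X_measurements_yield_complement:
  assumes "finite V1" "finite V2" "V1 \<inter> V2 = {}"
    and "s1 \<notin> V1 \<union> V2" "s2 \<notin> V1 \<union> V2" "s1 \<noteq> s2"
    and "E \<subseteq> {{u, w} | u w. u \<in> V1 \<and> w \<in> V2}"
  defines "W \<equiv> V1 \<union> {s1} \<union> V2 \<union> {s2}"
    and "G \<equiv> E \<union> {{s1, s2}} \<union> {{v, s2} | v. v \<in> V1} \<union> {{w, s1} | w. w \<in> V2}"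
    and "Gbar \<equiv> {{u, w} | u w. u \<in> V1 \<and> w \<in> V2 \<and> {u, w} \<notin> E}"
  shows "local_op (V1 \<union> V2)
      (\<lambda>v. phase_gate (if v \<in> V1 then pauli_eigenvalue a else pauli_eigenvalue b))
      (pauli_measure (W - {s1}) s2 PX b (pauli_measure W s1 PX a (graph_state W G)))
    = (\<lambda>T. (if a \<or> b then 1 else -1) * graph_state (V1 \<union> V2) Gbar T)"
proof
  fix T
  let ?\<phi> = "pauli_measure (W - {s1}) s2 PX b (pauli_measure W s1 PX a (graph_state W G))"
  let ?a = "pauli_eigenvalue a" and ?b = "pauli_eigenvalue b"
  let ?z = "\<lambda>v. if v \<in> V1 then ?a else ?b"
  show "local_op (V1 \<union> V2) (\<lambda>v. phase_gate (?z v)) ?\<phi> T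
      = (if a \<or> b then 1 else -1) * graph_state (V1 \<union> V2) Gbar T"
  proof (cases "T \<subseteq> V1 \<union> V2")
    case True
    let ?m = "card (V1 \<inter> T)" and ?n = "card (V2 \<inter> T)"
    have "T \<inter> {v. v \<in> V1} = V1 \<inter> T" "T \<inter> - {v. v \<in> V1} = V2 \<inter> T"
      using True assms(3) by auto
    then have "(\<Prod>v\<in>T. ?z v) = ?a ^ ?m * ?b ^ ?n"
      using finite_subset[OF True] assms(1,2) by (simp add: prod.If_cases)
    then have "local_op (V1 \<union> V2) (\<lambda>v. phase_gate (?z v)) ?\<phi> T = ?a ^ ?m * ?b ^ ?n * ?\<phi> T"
      using assms(1,2) True by (simp add: local_op_phase_gates)
    also have "\<dots> = graph_state (V1 \<union> V2) E T
        * (?a ^ ?m * ?b ^ ?n * (1 + ?a * (-1) ^ ?n + ?b * (-1) ^ ?m - ?a * ?b * (-1) ^ ?m * (-1) ^ ?n) / 2)"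
      unfolding W_def G_def
      by (simp only: X_measurements_of_super_nodes[OF assms(1,2,4-7) True]) (simp add: algebra_simps)
    also have "\<dots> = (if a \<or> b then 1 else -1) * ((-1) ^ (?m * ?n) * graph_state (V1 \<union> V2) E T)"
      by (simp only: phase_corrected_outcome_sign) (simp add: algebra_simps)
    finally show ?thesis
      unfolding Gbar_def using graph_state_bipartite_complement[OF assms(1-3,7) True] by simp
  qed (simp add: local_op_def graph_state_def)
qed

theorem lemma1:
  fixes V1 V2 :: "'v set" and E :: "'v set set" and s1 s2 :: 'v
  assumes "finite V1" "finite V2" "V1 \<noteq> {}" "V2 \<noteq> {}" "V1 \<inter> V2 = {}"
    and "s1 \<notin> V1 \<union> V2" "s2 \<notin> V1 \<union> V2" "s1 \<noteq> s2"
    and "E \<subseteq> {{u, w} | u w. u \<in> V1 \<and> w \<in> V2}"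
  shows "\<exists>P1 P2. \<forall>o1 o2.
    (let W = V1 \<union> {s1} \<union> V2 \<union> {s2};
         G = E \<union> {{s1, s2}} \<union> {{v, s2} | v. v \<in> V1} \<union> {{w, s1} | w. w \<in> V2};
         Gbar = {{u, w} | u w. u \<in> V1 \<and> w \<in> V2 \<and> {u, w} \<notin> E};
         \<phi> = pauli_measure (W - {s1}) s2 P2 o2
               (pauli_measure W s1 P1 o1 (graph_state W G))
     in \<phi> \<noteq> (\<lambda>_. 0) \<longrightarrow>
        (\<exists>U c. (\<forall>v \<in> V1 \<union> V2. unitary1 (U v)) \<and> c \<noteq> 0 \<and>
           local_op (V1 \<union> V2) U \<phi> = (\<lambda>T. c * graph_state (V1 \<union> V2) Gbar T)))"
  unfolding Let_def
  \<comment> \<open>\<open>conjI[rotated]\<close> puts the equation first, so that it determines \<open>U\<close> and \<open>c\<close>.\<close>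
  by (intro exI[of _ PX] allI impI exI conjI[rotated],
      rule X_measurements_yield_complement[OF assms(1,2,5-9)])
     (simp_all add: unitary1_phase_gate pauli_eigenvalue_def)

end
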